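(* Let $m$ be even, $N,n\ge1$ integers and $0<\varepsilon\le1$. Fix $x,y\in[m]^N$. For any two sequences $z,\bar z\in[m]^n$ such that both $(x,y,z)$ and $(x,y,\bar z)$ belong to the event $B$ (i.e., no symbol appears more than once in the third sequence, and no symbol of the third sequence appears in $x$ or in $y$), we have $$\frac{1}{|K_m|}\sum_{\omega\in K_m}\Pr_{(u,q^\omega,u)}(x,y,z)=\frac{1}{|K_m|}\sum_{\omega\in K_m}\Pr_{(u,q^\omega,u)}(x,y,\bar z),$$ $$\frac{1}{|K_m|}\sum_{\omega\in K_m}\Pr_{(u,q^\omega,q^\omega)}(x,y,z)=\frac{1}{|K_m|}\sum_{\omega\in K_m}\Pr_{(u,q^\omega,q^\omega)}(x,y,\bar z).$$
   Context: Let $u$ be the uniform distribution on $[m]=\{1,\dots,m\}$. Let $K_m$ be the collection of all subsets of $[m]$ of cardinality $m/2$. For $\omega\in K_m$ let $q^\omega$ be the distribution on $[m]$ with $q^\omega_j=(1+\varepsilon)/m$ for $j\in\omega$ and $q^\omega_j=(1-\varepsilon)/m$ for $j\notin\omega$. For distributions $a,b,c$ on $[m]$, $\Pr_{(a,b,c)}(x,y,z)=\prod_{i=1}^N a_{x_i}\prod_{i=1}^N b_{y_i}\prod_{i=1}^n c_{z_i}$ is the probability that $(X,Y,Z)=(x,y,z)$ when $X$ ($N$ symbols) is i.i.d. $a$, $Y$ ($N$ symbols) is i.i.d. $b$, $Z$ ($n$ symbols) is i.i.d. $c$, all independent. *)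

theory Defs
  imports "HOL-Analysis.Analysis"
begin

text \<open>Sequences in [m]^N are modelled as functions nat => nat, relevant on indices {..<N},
  with values in {1..m}. Distributions on [m] are functions nat => real.\<close>

definition unif :: "nat \<Rightarrow> nat \<Rightarrow> real" where
  "unif m j = 1 / real m"

definition qdist :: "nat \<Rightarrow> real \<Rightarrow> nat set \<Rightarrow> nat \<Rightarrow> real" where
  "qdist m \<epsilon> \<omega> j = (if j \<in> \<omega> then (1 + \<epsilon>) / real m else (1 - \<epsilon>) / real m)"

definition Kset :: "nat \<Rightarrow> nat set set" where
  "Kset m = {\<omega>. \<omega> \<subseteq> {1..m} \<and> card \<omega> = m div 2}"

definition Prob3 :: "nat \<Rightarrow> nat \<Rightarrow> (nat \<Rightarrow> real) \<Rightarrow> (nat \<Rightarrow> real) \<Rightarrow> (nat \<Rightarrow> real)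
    \<Rightarrow> (nat \<Rightarrow> nat) \<Rightarrow> (nat \<Rightarrow> nat) \<Rightarrow> (nat \<Rightarrow> nat) \<Rightarrow> real" where
  "Prob3 N n a b c x y z = (\<Prod>i<N. a (x i)) * (\<Prod>i<N. b (y i)) * (\<Prod>i<n. c (z i))"

definition eventB :: "nat \<Rightarrow> nat \<Rightarrow> (nat \<Rightarrow> nat) \<Rightarrow> (nat \<Rightarrow> nat) \<Rightarrow> (nat \<Rightarrow> nat) \<Rightarrow> bool" where
  "eventB N n x y z \<longleftrightarrow> inj_on z {..<n} \<and>
     (\<forall>i<n. z i \<notin> x ` {..<N} \<and> z i \<notin> y ` {..<N})"

end

theory Submission
  imports Defs "HOL-Combinatorics.Permutations"
begin

text \<open>Relabel the symbols by a permutation \<pi> of [m] that fixes every symbol of y and maps z to zb.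
  Since \<pi> permutes [m], it permutes the index set Kset m of the mixture, and the \<omega>-term of the
  mixture for z equals the (\<pi> \<omega>)-term of the mixture for zb. Under event B such a \<pi> exists:
  the distinct symbols of z and of zb all lie in the set of symbols of [m] not occurring in y.
  When the third distribution is uniform, the probability does not depend on z at all.\<close>

lemma bij_betw_extends_to_permutes:
  assumes "finite S" and "A \<subseteq> S" and "B \<subseteq> S" and "bij_betw f A B"
  obtains \<pi> where "\<pi> permutes S" and "\<And>a. a \<in> A \<Longrightarrow> \<pi> a = f a"
proof -
  have "finite A" and "finite B"
    using assms(1-3) finite_subset by blast+
  then have "card (S - A) = card (S - B)"
    using assms by (simp add: card_Diff_subset bij_betw_same_card[OF assms(4)])
  then obtain h where h: "bij_betw h (S - A) (S - B)"
    by (meson assms(1) finite_Diff finite_same_card_bij)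
  define \<pi> where "\<pi> t = (if t \<in> A then f t else if t \<in> S then h t else t)" for t
  have "bij_betw \<pi> A B"
    using assms(4) by (rule bij_betw_cong[THEN iffD1, rotated]) (simp add: \<pi>_def)
  moreover have "bij_betw \<pi> (S - A) (S - B)"
    using h by (rule bij_betw_cong[THEN iffD1, rotated]) (simp add: \<pi>_def)
  ultimately have "bij_betw \<pi> (A \<union> (S - A)) (B \<union> (S - B))"
    by (rule bij_betw_combine) blast
  moreover have "A \<union> (S - A) = S" and "B \<union> (S - B) = S"
    using assms(2,3) by blast+
  ultimately have "bij_betw \<pi> S S"
    by simp
  then have "\<pi> permutes S"
    by (rule bij_imp_permutes) (use assms(2) in \<open>auto simp: \<pi>_def\<close>)
  then show thesis
    by (rule that) (simp add: \<pi>_def)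
qed

lemma exists_permutes_mapping_injective_seq:
  assumes "finite S" and "inj_on z I" and "inj_on zb I" and "z ` I \<subseteq> S" and "zb ` I \<subseteq> S"
  obtains \<pi> where "\<pi> permutes S" and "\<And>i. i \<in> I \<Longrightarrow> \<pi> (z i) = zb i"
proof -
  have "bij_betw (zb \<circ> inv_into I z) (z ` I) (zb ` I)"
    using assms(2,3) by (intro bij_betw_trans[where B = I] bij_betw_inv_into inj_on_imp_bij_betw)
  then obtain \<pi> where "\<pi> permutes S" and "\<And>a. a \<in> z ` I \<Longrightarrow> \<pi> a = (zb \<circ> inv_into I z) a"
    using bij_betw_extends_to_permutes assms(1,4,5) by blast
  then show thesis
    using that assms(2) by simp
qed

lemma Kset_image_permutes:
  assumes "\<pi> permutes {1..m}" and "\<omega> \<in> Kset m"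
  shows "\<pi> ` \<omega> \<in> Kset m"
proof -
  have "\<omega> \<subseteq> {1..m}" and "card \<omega> = m div 2"
    using assms(2) by (simp_all add: Kset_def)
  then have "\<pi> ` \<omega> \<subseteq> \<pi> ` {1..m}" and "card (\<pi> ` \<omega>) = m div 2"
    using permutes_inj[OF assms(1)] by (auto simp: card_image inj_on_subset)
  then show ?thesis
    unfolding Kset_def permutes_image[OF assms(1)] by blast
qed

lemma sum_Kset_permutes:
  assumes "\<pi> permutes {1..m}"
  shows "(\<Sum>\<omega>\<in>Kset m. g (\<pi> ` \<omega>)) = (\<Sum>\<omega>\<in>Kset m. g \<omega>)"
proof (rule sum.reindex_bij_witness[of _ "image (inv \<pi>)" "image \<pi>"])
  show "\<And>\<omega>. \<omega> \<in> Kset m \<Longrightarrow> \<pi> ` \<omega> \<in> Kset m" and "\<And>\<omega>. \<omega> \<in> Kset m \<Longrightarrow> inv \<pi> ` \<omega> \<in> Kset m"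
    using Kset_image_permutes assms permutes_inv by blast+
qed (simp_all add: image_image permutes_inverses[OF assms])

lemma qdist_image_inj:
  assumes "inj \<pi>"
  shows "qdist m \<epsilon> (\<pi> ` \<omega>) (\<pi> j) = qdist m \<epsilon> \<omega> j"
  using assms by (simp add: qdist_def inj_image_mem_iff)

lemma Prob3_qdist_image_inj:
  assumes "inj \<pi>" and "\<And>i. i < N \<Longrightarrow> \<pi> (y i) = y i" and "\<And>i. i < n \<Longrightarrow> \<pi> (z i) = zb i"
  shows "Prob3 N n a (qdist m \<epsilon> (\<pi> ` \<omega>)) (qdist m \<epsilon> (\<pi> ` \<omega>)) x y zb
       = Prob3 N n a (qdist m \<epsilon> \<omega>) (qdist m \<epsilon> \<omega>) x y z"
proof -
  have "qdist m \<epsilon> (\<pi> ` \<omega>) (y i) = qdist m \<epsilon> \<omega> (y i)" if "i < N" for i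
    using qdist_image_inj[OF assms(1), of m \<epsilon> \<omega> "y i"] by (simp only: assms(2)[OF that])
  then have "(\<Prod>i<N. qdist m \<epsilon> (\<pi> ` \<omega>) (y i)) = (\<Prod>i<N. qdist m \<epsilon> \<omega> (y i))"
    by (intro prod.cong) simp_all
  moreover have "qdist m \<epsilon> (\<pi> ` \<omega>) (zb i) = qdist m \<epsilon> \<omega> (z i)" if "i < n" for i
    using qdist_image_inj[OF assms(1), of m \<epsilon> \<omega> "z i"] by (simp only: assms(3)[OF that])
  then have "(\<Prod>i<n. qdist m \<epsilon> (\<pi> ` \<omega>) (zb i)) = (\<Prod>i<n. qdist m \<epsilon> \<omega> (z i))"
    by (intro prod.cong) simp_all
  ultimately show ?thesis
    by (simp add: Prob3_def)
qed

lemma sum_Kset_Prob3_qdist_relabel: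
  assumes "\<pi> permutes {1..m}" and "\<And>i. i < N \<Longrightarrow> \<pi> (y i) = y i" and "\<And>i. i < n \<Longrightarrow> \<pi> (z i) = zb i"
  shows "(\<Sum>\<omega>\<in>Kset m. Prob3 N n a (qdist m \<epsilon> \<omega>) (qdist m \<epsilon> \<omega>) x y z)
       = (\<Sum>\<omega>\<in>Kset m. Prob3 N n a (qdist m \<epsilon> \<omega>) (qdist m \<epsilon> \<omega>) x y zb)"
proof -
  have "(\<Sum>\<omega>\<in>Kset m. Prob3 N n a (qdist m \<epsilon> \<omega>) (qdist m \<epsilon> \<omega>) x y zb)
      = (\<Sum>\<omega>\<in>Kset m. Prob3 N n a (qdist m \<epsilon> (\<pi> ` \<omega>)) (qdist m \<epsilon> (\<pi> ` \<omega>)) x y zb)"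
    using assms(1) by (rule sum_Kset_permutes[symmetric])
  also have "\<dots> = (\<Sum>\<omega>\<in>Kset m. Prob3 N n a (qdist m \<epsilon> \<omega>) (qdist m \<epsilon> \<omega>) x y z)"
    by (simp only: Prob3_qdist_image_inj[OF permutes_inj[OF assms(1)] assms(2,3)])
  finally show ?thesis
    by (rule sym)
qed

theorem lemma3:
  fixes m N n :: nat and \<epsilon> :: real and x y z zb :: "nat \<Rightarrow> nat"
  assumes "even m" and "N \<ge> 1" and "n \<ge> 1"
    and "0 < \<epsilon>" and "\<epsilon> \<le> 1"
    and "\<forall>i<N. x i \<in> {1..m}" and "\<forall>i<N. y i \<in> {1..m}"
    and "\<forall>i<n. z i \<in> {1..m}" and "\<forall>i<n. zb i \<in> {1..m}"
    and "eventB N n x y z" and "eventB N n x y zb"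
  shows "(1 / real (card (Kset m))) * (\<Sum>\<omega>\<in>Kset m. Prob3 N n (unif m) (qdist m \<epsilon> \<omega>) (unif m) x y z)
       = (1 / real (card (Kset m))) * (\<Sum>\<omega>\<in>Kset m. Prob3 N n (unif m) (qdist m \<epsilon> \<omega>) (unif m) x y zb)
    \<and> (1 / real (card (Kset m))) * (\<Sum>\<omega>\<in>Kset m. Prob3 N n (unif m) (qdist m \<epsilon> \<omega>) (qdist m \<epsilon> \<omega>) x y z)
       = (1 / real (card (Kset m))) * (\<Sum>\<omega>\<in>Kset m. Prob3 N n (unif m) (qdist m \<epsilon> \<omega>) (qdist m \<epsilon> \<omega>) x y zb)"
proof -
  define S where "S = {1..m} - y ` {..<N}"
  have "finite S"
    by (simp add: S_def)
  moreover have "inj_on z {..<n}" and "inj_on zb {..<n}" and "z ` {..<n} \<subseteq> S" and "zb ` {..<n} \<subseteq> S"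
    using assms(8-11) by (auto simp: S_def eventB_def)
  ultimately obtain \<pi> where \<pi>: "\<pi> permutes S" and \<pi>z: "\<And>i. i \<in> {..<n} \<Longrightarrow> \<pi> (z i) = zb i"
    by (rule exists_permutes_mapping_injective_seq) (rule that)
  have "\<pi> permutes {1..m}"
    using \<pi> by (rule permutes_subset) (simp add: S_def)
  moreover have "\<pi> (y i) = y i" if "i < N" for i
    using that by (simp add: permutes_not_in[OF \<pi>] S_def)
  moreover have "\<pi> (z i) = zb i" if "i < n" for i
    using \<pi>z that by simp
  ultimately have relabel: "(\<Sum>\<omega>\<in>Kset m. Prob3 N n a (qdist m \<epsilon> \<omega>) (qdist m \<epsilon> \<omega>) x y z)
      = (\<Sum>\<omega>\<in>Kset m. Prob3 N n a (qdist m \<epsilon> \<omega>) (qdist m \<epsilon> \<omega>) x y zb)" for a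
    by (rule sum_Kset_Prob3_qdist_relabel)
  have "Prob3 N n a b (unif m) x y z = Prob3 N n a b (unif m) x y zb" for a b
    by (simp add: Prob3_def unif_def)
  with relabel show ?thesis
    by simp
qed

end
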